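(* Let $n\ge1$ and consider the matrix algebra $M_n(\mathbb{R})$, with an element $s$ identified with the vector in $\mathbb{R}^{n^2}$ obtained by stacking its columns, and let $\mathcal{T}$ be the $n^2\times n^2$ matrix representing the transpose map $s\mapsto s^T$ in these coordinates. Then $\mathfrak{u}_{M_n(\mathbb{R})}$ is one-dimensional, $\mathcal{T}$ is the unique normalized uncurling metric of $M_n(\mathbb{R})$, and the associated special unital norm is $(\det s)^{1/n}$, i.e. the usual norm $(\det s)^n$ (the determinant of the left regular representation of $s$) raised to the power $1/n^2$.
   Context: For an algebra with underlying vector space $\mathbb{R}^N$ (standard basis, elements $s$ as column vectors, $\mathbf{d}s$ the column of coordinate differentials, "$\cdot$" the Euclidean dot product, $\|\mathbf{1}\|^2=\mathbf{1}\cdot\mathbf{1}$; for $M_n(\mathbb{R})$, $\|\mathbf{1}\|^2=n$): an uncurling metric is a real symmetric $N\times N$ matrix $L$ with $d\big((s^{-1})^TL\,\mathbf{d}s\big)=0$ on an open ball centered at $\mathbf{1}$ consisting only of units; the anti-rotor $\mathfrak{u}$ is the vector space of uncurling metrics. A normalized uncurling metric is an uncurling metric $L$ with $s^TLs^{-1}=\|\mathbf{1}\|^2$ near $\mathbf{1}$. The unital norm associated with $L$ is $\ell(s)=\exp\!\big(\frac{1}{\|\mathbf{1}\|^2}\int_{\mathbf{1}}^s[Lt^{-1}]\cdot\mathbf{d}t\big)$ near $\mathbf{1}$; a special unital norm is one associated with a normalized uncurling metric. *)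

theory Defs
  imports "HOL-Analysis.Analysis"
begin

text \<open>The matrix algebra M_n(R) is real^'n^'n (entry s $ i $ j = row i, column j).
  Its underlying coordinate space R^(n^2) is real^('n \<times> 'n), the coordinate of index
  (i,j) being the entry s $ i $ j.\<close>

definition mvec :: "real^'n::finite^'n \<Rightarrow> real^('n \<times> 'n)" where
  "mvec s = (\<chi> p. s $ fst p $ snd p)"

definition munvec :: "real^('n::finite \<times> 'n) \<Rightarrow> real^'n^'n" where
  "munvec x = (\<chi> i j. x $ (i, j))"

definition mone :: "real^('n::finite \<times> 'n)" where
  "mone = mvec (mat 1 :: real^'n^'n)"

definition one_normsq :: "'n::finite itself \<Rightarrow> real" where
  "one_normsq _ = (mone :: real^('n \<times> 'n)) \<bullet> mone"

definition minv :: "real^('n::finite \<times> 'n) \<Rightarrow> real^('n \<times> 'n)" where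
  "minv x = mvec (matrix_inv (munvec x))"

definition transpose_matrix :: "real^('n::finite \<times> 'n)^('n \<times> 'n)" where
  "transpose_matrix = (\<chi> p q. if q = prod.swap p then 1 else 0)"

definition left_reg :: "real^'n::finite^'n \<Rightarrow> real^('n \<times> 'n)^('n \<times> 'n)" where
  "left_reg s = (\<chi> p q. if snd q = snd p then s $ fst p $ fst q else 0)"

text \<open>The 1-form with coefficient vector field F is closed on S:
  d(sum_i F_i dx_i) = 0, i.e. the partial derivatives satisfy d_j F_i = d_i F_j.\<close>
definition closed_form_on :: "(real^'m::finite \<Rightarrow> real^'m) \<Rightarrow> (real^'m) set \<Rightarrow> bool" where
  "closed_form_on F S \<longleftrightarrow>
     (\<forall>x\<in>S. \<exists>D. (F has_derivative D) (at x) \<and>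
        (\<forall>i j. D (axis j 1) $ i = D (axis i 1) $ j))"

text \<open>Uncurling metric: symmetric L such that d((s^{-1})^T L ds) = 0 on an open ball
  centered at 1 consisting only of units.\<close>
definition uncurling_metric :: "real^('n::finite \<times> 'n)^('n \<times> 'n) \<Rightarrow> bool" where
  "uncurling_metric L \<longleftrightarrow> transpose L = L \<and>
     (\<exists>r>0. (\<forall>x\<in>ball (mone :: real^('n \<times> 'n)) r. invertible (munvec x)) \<and>
            closed_form_on (\<lambda>x. L *v minv x) (ball mone r))"

definition anti_rotor :: "'n::finite itself \<Rightarrow> (real^('n \<times> 'n)^('n \<times> 'n)) set" where
  "anti_rotor _ = {L. uncurling_metric L}"

definition normalized_uncurling_metric :: "real^('n::finite \<times> 'n)^('n \<times> 'n) \<Rightarrow> bool" where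
  "normalized_uncurling_metric L \<longleftrightarrow> uncurling_metric L \<and>
     (\<exists>r>0. \<forall>x\<in>ball mone r. x \<bullet> (L *v minv x) = one_normsq TYPE('n))"

text \<open>Unital norm: exp((1/||1||^2) * int_1^s [L t^{-1}] . dt), the line integral taken
  along the straight segment from 1 to s (path-independent near 1 since the form is closed).\<close>
definition unital_norm :: "real^('n::finite \<times> 'n)^('n \<times> 'n) \<Rightarrow> real^('n \<times> 'n) \<Rightarrow> real" where
  "unital_norm L s = exp ((1 / one_normsq TYPE('n)) *
      integral {0..1} (\<lambda>t. (L *v minv (mone + t *\<^sub>R (s - mone))) \<bullet> (s - mone)))"

end

theory Submission
  imports Defs
begin

text \<open>
  Write \<open>S = s\<^sup>-\<^sup>1\<close>. The one-form of a metric \<open>L\<close> is \<open>L vec(S) \<cdot> ds\<close>, whose derivative in direction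
  \<open>h\<close> is \<open>-L vec(S h S)\<close>, so closedness means that \<open>(L vec(S E\<^sub>q S))\<^sub>p\<close> is symmetric in the
  elementary matrices \<open>E\<^sub>p, E\<^sub>q\<close>. For the transpose map this entry is \<open>S\<^sub>b\<^sub>c S\<^sub>d\<^sub>a\<close> for
  \<open>p = (a,b), q = (c,d)\<close>, visibly symmetric, and the form is \<open>tr(s\<^sup>-\<^sup>1 ds) = d log det s\<close>.
  Conversely, at \<open>s = (1 + tA)\<^sup>-\<^sup>1\<close> the entry is a quadratic polynomial in \<open>t\<close>; symmetry of its
  linear coefficient for \<open>A = E\<^sub>i\<^sub>j\<close> is a linear system on the entries of \<open>L\<close> whose solutions
  are the multiples of the transpose map, and evaluating at \<open>s = 1\<close> normalises the multiple to 1.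
  By Jacobi's formula the unital norm is \<open>exp(n\<^sup>-\<^sup>1 log det s) = (det s)\<^sup>1\<^sup>/\<^sup>n\<close>, and along the
  segment from 1 to \<open>s\<close> the logarithmic derivative of \<open>det\<close> of the left regular representation is
  \<open>n\<close> times that of \<open>det\<close>, so the former is \<open>(det s)\<^sup>n\<close>.
\<close>

section \<open>Inverse matrices\<close>

lemma matrix_inv_right:
  fixes A :: "'a::semiring_1^'n^'m"
  assumes "invertible A"
  shows "A ** matrix_inv A = mat 1"
  using someI_ex[OF assms[unfolded invertible_def]] unfolding matrix_inv_def by blast

lemma matrix_inv_left:
  fixes A :: "'a::semiring_1^'n^'m"
  assumes "invertible A"
  shows "matrix_inv A ** A = mat 1"
  using someI_ex[OF assms[unfolded invertible_def]] unfolding matrix_inv_def by blast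

lemma matrix_inv_eqI:
  fixes A B :: "'a::field^'n^'n"
  assumes "A ** B = mat 1"
  shows "matrix_inv A = B"
proof -
  have "invertible A" using assms invertible_right_inverse by blast
  then have "matrix_inv A = matrix_inv A ** (A ** B)" by (simp add: assms)
  also have "\<dots> = B" by (simp add: matrix_mul_assoc matrix_inv_left \<open>invertible A\<close>)
  finally show ?thesis .
qed

lemma matrix_inv_mat_1 [simp]: "matrix_inv (mat 1 :: 'a::field^'n^'n) = mat 1"
  by (rule matrix_inv_eqI) simp

lemma matrix_inv_cramer:
  fixes A :: "'a::field^'n^'n"
  assumes "det A \<noteq> 0"
  shows "matrix_inv A $ k $ j = det (\<chi> i l. if l = k then mat 1 $ i $ j else A $ i $ l) / det A"
proof -
  have "invertible A" using assms invertible_det_nz by blast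
  have "A *v column j (matrix_inv A) = column j (A ** matrix_inv A)"
    by (simp add: vec_eq_iff column_def matrix_vector_mult_def matrix_matrix_mult_def)
  then have "A *v column j (matrix_inv A) = column j (mat 1)"
    by (simp add: matrix_inv_right \<open>invertible A\<close>)
  then have "column j (matrix_inv A) $ k
      = det (\<chi> i l. if l = k then column j (mat 1) $ i else A $ i $ l) / det A"
    unfolding cramer[OF assms] by simp
  then show ?thesis by (simp add: column_def cong: if_cong)
qed

lemma continuous_on_det [continuous_intros]:
  fixes f :: "'a::topological_space \<Rightarrow> real^'n::finite^'n"
  assumes "continuous_on S f"
  shows "continuous_on S (\<lambda>x. det (f x))"
  unfolding det_def by (intro continuous_intros assms)

lemma open_det_nonzero: "open {A :: real^'n::finite^'n. det A \<noteq> 0}"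
  by (rule open_Collect_neq) (intro continuous_intros)+

lemma isCont_matrix_inv:
  fixes A :: "real^'n::finite^'n"
  assumes "det A \<noteq> 0"
  shows "isCont matrix_inv A"
proof -
  have replace_column: "continuous_on S (\<lambda>A :: real^'n^'n. \<chi> i l. if l = k then c i else A $ i $ l)"
    for S k and c :: "'n \<Rightarrow> real"
    by (intro continuous_on_vec_lambda, rename_tac i l, case_tac "l = k") (auto intro!: continuous_intros)
  have "continuous_on {A. det A \<noteq> 0}
      (\<lambda>A :: real^'n^'n. \<chi> k j. det (\<chi> i l. if l = k then mat 1 $ i $ j else A $ i $ l) / det A)"
    by (intro continuous_on_vec_lambda continuous_on_divide continuous_on_det replace_column
        continuous_on_id) auto
  then have "continuous_on {A :: real^'n^'n. det A \<noteq> 0} matrix_inv"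
    by (rule continuous_on_eq) (simp add: vec_eq_iff matrix_inv_cramer)
  then show ?thesis
    using assms open_det_nonzero continuous_on_eq_continuous_at by blast
qed

lemma matrix_add_rdistrib: "(B + C) ** A = B ** A + C ** A"
  by (vector matrix_matrix_mult_def sum.distrib[symmetric] field_simps)

lemma matrix_diff_rdistrib: "((B :: 'a::ring_1^'n^'m) - C) ** A = B ** A - C ** A"
  by (vector matrix_matrix_mult_def sum_subtractf[symmetric] field_simps)

lemma bounded_bilinear_matrix_mult:
  "bounded_bilinear ((**) :: real^'n::finite^'m::finite \<Rightarrow> real^'p::finite^'n \<Rightarrow> real^'p^'m)"
proof -
  have "bilinear ((**) :: real^'n^'m \<Rightarrow> real^'p^'n \<Rightarrow> real^'p^'m)"
    unfolding bilinear_def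
    by (auto intro!: linearI simp: matrix_add_ldistrib matrix_add_rdistrib scalar_matrix_assoc matrix_scalar_ac)
  then show ?thesis using bilinear_conv_bounded_bilinear by blast
qed

lemma matrix_inv_add_remainder:
  fixes A H :: "real^'n::finite^'n"
  assumes "invertible A" and "invertible (A + H)"
  shows "matrix_inv (A + H) - matrix_inv A + matrix_inv A ** H ** matrix_inv A
    = (matrix_inv A - matrix_inv (A + H)) ** H ** matrix_inv A"
proof -
  let ?S = "matrix_inv A" and ?T = "matrix_inv (A + H)"
  have "?S = ?T ** (A + H) ** ?S"
    by (simp add: matrix_inv_left assms(2))
  also have "\<dots> = ?T + ?T ** H ** ?S"
    by (simp add: matrix_add_ldistrib matrix_add_rdistrib matrix_mul_assoc[symmetric]
        matrix_inv_right assms(1))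
  finally have "?T - ?S = - (?T ** H ** ?S)"
    by (simp add: algebra_simps)
  then show ?thesis
    by (simp add: matrix_diff_rdistrib)
qed

lemma has_derivative_matrix_inv:
  fixes A :: "real^'n::finite^'n"
  assumes "invertible A"
  shows "(matrix_inv has_derivative (\<lambda>H. - (matrix_inv A ** H ** matrix_inv A))) (at A)"
proof -
  let ?S = "matrix_inv A" and ?T = "\<lambda>H. matrix_inv (A + H)"
  interpret bb: bounded_bilinear "(**) :: real^'n^'n \<Rightarrow> real^'n^'n \<Rightarrow> real^'n^'n"
    by (rule bounded_bilinear_matrix_mult)
  obtain K where K: "\<And>(a :: real^'n^'n) (b :: real^'n^'n). norm (a ** b) \<le> norm a * norm b * K" and "K > 0"
    using bb.pos_bounded by blast
  have "det A \<noteq> 0" using assms invertible_det_nz by blast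
  have T_tendsto: "(?T \<longlongrightarrow> ?S) (at 0)"
    using isCont_matrix_inv[OF \<open>det A \<noteq> 0\<close>] by (simp add: isCont_def LIM_offset_zero_iff)
  have "((\<lambda>H. A + H) \<longlongrightarrow> A + 0) (at 0)"
    by (intro tendsto_intros)
  then have "\<forall>\<^sub>F H in at 0. det (A + H) \<noteq> 0"
    using topological_tendstoD[OF _ open_det_nonzero] \<open>det A \<noteq> 0\<close> by fastforce
  then have bound: "\<forall>\<^sub>F H in at 0.
      norm (norm (?T H - ?S - - (?S ** H ** ?S)) / norm H) \<le> K * K * norm ?S * norm (?S - ?T H)"
  proof (rule eventually_mono)
    fix H :: "real^'n^'n"
    assume "det (A + H) \<noteq> 0"
    then have "invertible (A + H)"
      by (simp add: invertible_det_nz)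
    have "norm ((?S - ?T H) ** H ** ?S) \<le> norm ((?S - ?T H) ** H) * norm ?S * K"
      by (rule K)
    also have "\<dots> \<le> norm (?S - ?T H) * norm H * K * norm ?S * K"
      using K[of "?S - ?T H" H] \<open>K > 0\<close> by (intro mult_right_mono) auto
    finally show "norm (norm (?T H - ?S - - (?S ** H ** ?S)) / norm H) \<le> K * K * norm ?S * norm (?S - ?T H)"
      using matrix_inv_add_remainder[OF assms \<open>invertible (A + H)\<close>]
      by (cases "H = 0") (auto simp: divide_le_eq mult_ac)
  qed
  have "((\<lambda>H. K * K * norm ?S * norm (?S - ?T H)) \<longlongrightarrow> K * K * norm ?S * norm (?S - ?S)) (at 0)"
    by (intro tendsto_intros T_tendsto)
  then have "((\<lambda>H. norm (?T H - ?S - - (?S ** H ** ?S)) / norm H) \<longlongrightarrow> 0) (at 0)"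
    using Lim_null_comparison[OF bound] by simp
  moreover have "bounded_linear (\<lambda>H. - (?S ** H ** ?S))"
    by (intro bounded_linear_minus bounded_linear_compose[OF bb.bounded_linear_left]
        bb.bounded_linear_right)
  ultimately show ?thesis
    unfolding has_derivative_at by simp
qed

section \<open>Jacobi's formula\<close>

lemma det_replace_row:
  fixes M :: "'a::comm_ring_1^'n::finite^'n"
  shows "det (\<chi> j. if j = i then b else M $ j)
    = (\<Sum>p | p permutes UNIV. of_int (sign p) * (b $ p i * (\<Prod>j\<in>UNIV - {i}. M $ j $ p j)))"
  unfolding det_def
proof (rule sum.cong[OF refl])
  fix p :: "'n \<Rightarrow> 'n"
  have "(\<Prod>j\<in>UNIV. (\<chi> j. if j = i then b else M $ j) $ j $ p j)
      = (\<Prod>j\<in>insert i (UNIV - {i}). (\<chi> j. if j = i then b else M $ j) $ j $ p j)"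
    by (simp add: insert_absorb)
  also have "\<dots> = b $ p i * (\<Prod>j\<in>UNIV - {i}. M $ j $ p j)"
    by (subst prod.insert) (auto intro!: prod.cong)
  finally show "of_int (sign p) * (\<Prod>j\<in>UNIV. (\<chi> j. if j = i then b else M $ j) $ j $ p j)
      = of_int (sign p) * (b $ p i * (\<Prod>j\<in>UNIV - {i}. M $ j $ p j))"
    by simp
qed

lemma det_replace_row_invertible:
  fixes M :: "'a::field^'n::finite^'n"
  assumes "invertible M"
  shows "det (\<chi> j. if j = i then b else M $ j) = (b v* matrix_inv M) $ i * det M"
proof -
  let ?x = "b v* matrix_inv M"
  have row_eq: "row k M = M $ k" for k
    by (simp add: row_def vec_eq_iff)
  have "(\<Sum>k\<in>UNIV. ?x $ k *s M $ k) = ?x v* M"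
    by (simp add: vec_eq_iff sum_component vector_matrix_mult_def mult.commute)
  also have "\<dots> = b"
    by (simp add: vector_matrix_mul_assoc matrix_inv_left assms)
  finally have sum_eq: "(\<Sum>k\<in>UNIV. ?x $ k *s M $ k) = b" .
  show ?thesis
    using cramer_lemma_transpose[of i ?x M] unfolding row_eq sum_eq .
qed

theorem has_real_derivative_det_line:
  fixes A B :: "real^'n::finite^'n"
  assumes "invertible (A + t *\<^sub>R B)"
  shows "((\<lambda>u. det (A + u *\<^sub>R B)) has_real_derivative
           det (A + t *\<^sub>R B) * trace (matrix_inv (A + t *\<^sub>R B) ** B)) (at t)"
proof -
  let ?M = "A + t *\<^sub>R B"
  have "((\<lambda>u. det (A + u *\<^sub>R B)) has_real_derivative
      (\<Sum>p | p permutes UNIV. of_int (sign p) *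
         (\<Sum>i\<in>UNIV. B $ i $ p i * (\<Prod>j\<in>UNIV - {i}. ?M $ j $ p j)))) (at t)"
    unfolding det_def
    by (intro DERIV_sum DERIV_cmult has_field_derivative_prod) (auto intro!: derivative_eq_intros)
  also have "(\<Sum>p | p permutes UNIV. of_int (sign p) *
         (\<Sum>i\<in>UNIV. B $ i $ p i * (\<Prod>j\<in>UNIV - {i}. ?M $ j $ p j)))
      = (\<Sum>i\<in>UNIV. det (\<chi> j. if j = i then B $ i else ?M $ j))"
    unfolding det_replace_row sum_distrib_left by (rule sum.swap)
  also have "\<dots> = trace (B ** matrix_inv ?M) * det ?M"
  proof -
    have "(B $ i v* matrix_inv ?M) $ i = (B ** matrix_inv ?M) $ i $ i" for i
      by (simp add: vector_matrix_mult_def matrix_matrix_mult_def)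
    then show ?thesis
      by (simp only: det_replace_row_invertible[OF assms] trace_def sum_distrib_right)
  qed
  also have "\<dots> = det ?M * trace (matrix_inv ?M ** B)"
    by (metis trace_mul_sym mult.commute)
  finally show ?thesis .
qed

section \<open>Matrices as coordinate vectors\<close>

lemma mvec_nth [simp]: "mvec A $ p = A $ fst p $ snd p"
  by (simp add: mvec_def)

lemma munvec_nth [simp]: "munvec x $ i $ j = x $ (i, j)"
  by (simp add: munvec_def)

lemma munvec_mvec [simp]: "munvec (mvec A) = A"
  by (simp add: vec_eq_iff)

lemma mvec_munvec [simp]: "mvec (munvec x) = x"
  by (simp add: vec_eq_iff)

lemma munvec_mone [simp]: "munvec mone = mat 1"
  by (simp add: mone_def)

lemma bounded_linear_mvec: "bounded_linear (mvec :: real^'n::finite^'n \<Rightarrow> _)"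
  by (rule linear_conv_bounded_linear[THEN iffD1]) (intro linearI; simp add: vec_eq_iff)

lemma bounded_linear_munvec: "bounded_linear (munvec :: real^('n::finite \<times> 'n) \<Rightarrow> _)"
  by (rule linear_conv_bounded_linear[THEN iffD1]) (intro linearI; simp add: vec_eq_iff)

lemma munvec_add: "munvec (x + y) = munvec x + munvec y"
  by (simp add: vec_eq_iff)

lemma munvec_diff: "munvec (x - y) = munvec x - munvec y"
  by (simp add: vec_eq_iff)

lemma munvec_scaleR: "munvec (c *\<^sub>R x) = c *\<^sub>R munvec x"
  by (simp add: vec_eq_iff)

lemma mvec_add: "mvec (A + B) = mvec A + mvec B"
  by (simp add: vec_eq_iff)

lemma mvec_scaleR: "mvec (c *\<^sub>R A) = c *\<^sub>R mvec A"
  by (simp add: vec_eq_iff)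

lemma mvec_uminus: "mvec (- A) = - mvec A"
  by (simp add: vec_eq_iff)

lemma sum_UNIV_pair: "(\<Sum>p\<in>UNIV. f p) = (\<Sum>a\<in>UNIV. \<Sum>b\<in>UNIV. f (a, b))"
  by (simp add: sum.cartesian_product UNIV_Times_UNIV[symmetric] del: UNIV_Times_UNIV)

lemma inner_vec_sum_pairs:
  fixes x y :: "real^('n::finite \<times> 'm::finite)"
  shows "x \<bullet> y = (\<Sum>i\<in>UNIV. \<Sum>j\<in>UNIV. x $ (i, j) * y $ (i, j))"
  by (simp add: inner_vec_def sum_UNIV_pair)

lemma one_normsq_eq_card: "one_normsq TYPE('n::finite) = real CARD('n)"
  by (simp add: one_normsq_def inner_vec_sum_pairs mone_def mat_def if_distrib if_distribR
      cong: if_cong)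

lemma has_derivative_minv:
  fixes x :: "real^('n::finite \<times> 'n)"
  assumes "invertible (munvec x)"
  shows "(minv has_derivative
           (\<lambda>h. - mvec (matrix_inv (munvec x) ** munvec h ** matrix_inv (munvec x)))) (at x)"
proof -
  have "((mvec \<circ> matrix_inv \<circ> munvec) has_derivative
      (mvec \<circ> (\<lambda>H. - (matrix_inv (munvec x) ** H ** matrix_inv (munvec x))) \<circ> munvec)) (at x)"
    by (intro diff_chain_at bounded_linear_imp_has_derivative bounded_linear_mvec
        bounded_linear_munvec has_derivative_matrix_inv) (simp add: assms)
  then show ?thesis
    by (simp add: o_def minv_def[abs_def] mvec_uminus)
qed

lemma has_derivative_matrix_vector_minv:
  fixes x :: "real^('n::finite \<times> 'n)" and L :: "real^('n \<times> 'n)^'m::finite"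
  assumes "invertible (munvec x)"
  shows "((\<lambda>x. L *v minv x) has_derivative
           (\<lambda>h. - (L *v mvec (matrix_inv (munvec x) ** munvec h ** matrix_inv (munvec x))))) (at x)"
  using has_derivative_compose[OF has_derivative_minv[OF assms]
      bounded_linear_imp_has_derivative[OF matrix_vector_mul_bounded_linear[of L]]]
  by (simp add: o_def linear_neg[OF matrix_vector_mul_linear])

section \<open>The transpose metric\<close>

lemma transpose_matrix_mult_nth: "(transpose_matrix *v v) $ p = v $ prod.swap p"
  by (simp add: matrix_vector_mult_def transpose_matrix_def if_distrib if_distribR cong: if_cong)

lemma transpose_matrix_inner_eq_trace:
  fixes A :: "real^'n::finite^'n"
  shows "(transpose_matrix *v mvec A) \<bullet> v = trace (A ** munvec v)"
proof -
  have "(transpose_matrix *v mvec A) \<bullet> v = (\<Sum>i\<in>UNIV. \<Sum>j\<in>UNIV. A $ j $ i * v $ (i, j))"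
    by (simp add: inner_vec_sum_pairs transpose_matrix_mult_nth)
  also have "\<dots> = trace (A ** munvec v)"
    by (subst sum.swap) (simp add: trace_def matrix_matrix_mult_def)
  finally show ?thesis .
qed

lemma inner_transpose_matrix_minv:
  fixes x :: "real^('n::finite \<times> 'n)"
  assumes "invertible (munvec x)"
  shows "x \<bullet> (transpose_matrix *v minv x) = real CARD('n)"
  using transpose_matrix_inner_eq_trace[of "matrix_inv (munvec x)" x]
  by (simp add: inner_commute minv_def matrix_inv_left assms trace_I)

lemma elementary_mult_matrix_nth:
  fixes A :: "real^'n::finite^'n"
  shows "(munvec (axis q 1) ** A) $ i $ j = (if i = fst q then A $ snd q $ j else 0)"
  by (cases "i = fst q")
    (simp_all add: matrix_matrix_mult_def axis_def prod_eq_iff if_distrib[of "\<lambda>z. z * _"] cong: if_cong)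

lemma matrix_mult_elementary_nth:
  fixes A :: "real^'n::finite^'n"
  shows "(A ** munvec (axis q 1)) $ i $ j = (if j = snd q then A $ i $ fst q else 0)"
  by (cases "j = snd q")
    (simp_all add: matrix_matrix_mult_def axis_def prod_eq_iff if_distrib cong: if_cong)

lemma elementary_matrix_mult:
  "munvec (axis (a, b) 1) ** munvec (axis (c, d) 1)
    = (if b = c then munvec (axis (a, d) 1) else (0 :: real^'n::finite^'n))"
  by (simp add: vec_eq_iff elementary_mult_matrix_nth) (auto simp: axis_def)

lemma matrix_vector_mult_axis_nth:
  fixes L :: "real^'n::finite^'m::finite"
  shows "(L *v axis q 1) $ p = L $ p $ q"
  by (simp add: matrix_vector_mult_basis column_def)

lemma mvec_0 [simp]: "mvec 0 = 0"
  by (simp add: vec_eq_iff)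

lemma elementary_sandwich_nth:
  fixes A :: "real^'n::finite^'n"
  shows "(A ** munvec (axis q 1) ** A) $ i $ j = A $ i $ fst q * A $ snd q $ j"
  by (simp add: matrix_matrix_mult_def[of "A ** munvec (axis q 1)"] matrix_mult_elementary_nth
      if_distrib[of "\<lambda>z. z * _"] cong: if_cong)

lemma closed_form_on_transpose_matrix:
  assumes "\<forall>x\<in>S. invertible (munvec x)"
  shows "closed_form_on (\<lambda>x. (c *\<^sub>R transpose_matrix) *v minv x) S"
  unfolding closed_form_on_def
proof
  fix x assume "x \<in> S"
  let ?A = "matrix_inv (munvec x)"
  let ?D = "\<lambda>h. - ((c *\<^sub>R transpose_matrix) *v mvec (?A ** munvec h ** ?A))"
  have "((\<lambda>x. (c *\<^sub>R transpose_matrix) *v minv x) has_derivative ?D) (at x)"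
    using assms \<open>x \<in> S\<close> by (simp add: has_derivative_matrix_vector_minv)
  moreover have "?D (axis j 1) $ i = ?D (axis i 1) $ j" for i j
    by (simp add: scaleR_matrix_vector_assoc[symmetric] transpose_matrix_mult_nth
        elementary_sandwich_nth)
  ultimately show "\<exists>D. ((\<lambda>x. (c *\<^sub>R transpose_matrix) *v minv x) has_derivative D) (at x) \<and>
      (\<forall>i j. D (axis j 1) $ i = D (axis i 1) $ j)"
    by blast
qed

lemma det_munvec_pos_near_mone: "\<exists>r>0. \<forall>x\<in>ball (mone :: real^('n::finite \<times> 'n)) r. det (munvec x) > 0"
proof -
  have "open {x :: real^('n \<times> 'n). det (munvec x) > 0}"
    by (intro open_Collect_less continuous_intros linear_continuous_on bounded_linear_munvec)
  moreover have "mone \<in> {x :: real^('n \<times> 'n). det (munvec x) > 0}"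
    by simp
  ultimately show ?thesis
    by (metis (no_types, lifting) mem_Collect_eq open_contains_ball subset_iff)
qed

lemma uncurling_metric_scaleR_transpose_matrix:
  "uncurling_metric (c *\<^sub>R (transpose_matrix :: real^('n::finite \<times> 'n)^('n \<times> 'n)))"
proof -
  obtain r where "r > 0" and pos: "\<forall>x\<in>ball (mone :: real^('n \<times> 'n)) r. det (munvec x) > 0"
    using det_munvec_pos_near_mone by blast
  then have "\<forall>x\<in>ball (mone :: real^('n \<times> 'n)) r. invertible (munvec x)"
    by (fastforce simp: invertible_det_nz)
  moreover have "transpose (c *\<^sub>R transpose_matrix) = c *\<^sub>R (transpose_matrix :: real^('n \<times> 'n)^('n \<times> 'n))"
    by (auto simp: transpose_def transpose_matrix_def vec_eq_iff prod_eq_iff)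
  ultimately show ?thesis
    unfolding uncurling_metric_def using \<open>r > 0\<close> closed_form_on_transpose_matrix by blast
qed

section \<open>Uniqueness of uncurling metrics\<close>

lemma quadratic_eq_near_0_imp_linear_coeff_eq:
  fixes a b c a' b' c' :: real
  assumes "\<forall>\<^sub>F t in nhds 0. a + t * b + t\<^sup>2 * c = a' + t * b' + t\<^sup>2 * c'"
  shows "b = b'"
proof -
  obtain \<delta> where "\<delta> > 0" and eq: "\<And>t. \<bar>t\<bar> < \<delta> \<Longrightarrow> a + t * b + t\<^sup>2 * c = a' + t * b' + t\<^sup>2 * c'"
    using assms unfolding eventually_nhds_metric dist_real_def by auto
  let ?t = "\<delta> / 2"
  have "a + ?t * b + ?t\<^sup>2 * c = a' + ?t * b' + ?t\<^sup>2 * c'"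
    and "a + (- ?t) * b + (- ?t)\<^sup>2 * c = a' + (- ?t) * b' + (- ?t)\<^sup>2 * c'"
    by (rule eq, use \<open>\<delta> > 0\<close> in simp)+
  then have "?t * b = ?t * b'"
    by (simp only: mult_minus_left power2_minus)
  then show ?thesis
    using \<open>\<delta> > 0\<close> by simp
qed

lemma eventually_identity_perturbation:
  fixes A :: "real^'n::finite^'n"
  assumes "r > 0"
  shows "\<forall>\<^sub>F t in nhds 0. invertible (mat 1 + t *\<^sub>R A) \<and> mvec (matrix_inv (mat 1 + t *\<^sub>R A)) \<in> ball mone r"
proof -
  have "((\<lambda>t. mat 1 + t *\<^sub>R A) \<longlongrightarrow> mat 1 + 0 *\<^sub>R A) (nhds (0::real))"
    by (intro tendsto_intros filterlim_ident)
  then have to_id: "((\<lambda>t. mat 1 + t *\<^sub>R A) \<longlongrightarrow> mat 1) (nhds (0::real))"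
    by simp
  have "\<forall>\<^sub>F t in nhds 0. det (mat 1 + t *\<^sub>R A) \<noteq> 0"
    using topological_tendstoD[OF to_id open_det_nonzero] by simp
  moreover have "\<forall>\<^sub>F t in nhds 0. mvec (matrix_inv (mat 1 + t *\<^sub>R A)) \<in> ball mone r"
  proof -
    have "((\<lambda>t. mvec (matrix_inv (mat 1 + t *\<^sub>R A))) \<longlongrightarrow> mvec (matrix_inv (mat 1 :: real^'n^'n))) (nhds 0)"
      by (intro bounded_linear.tendsto[OF bounded_linear_mvec] isCont_tendsto_compose[OF isCont_matrix_inv to_id]) simp
    then show ?thesis
      using assms by (intro topological_tendstoD) (auto simp: mone_def)
  qed
  ultimately show ?thesis
    by eventually_elim (simp add: invertible_det_nz)
qed

lemma uncurling_metric_sandwich_symmetric: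
  fixes L :: "real^('n::finite \<times> 'n)^('n \<times> 'n)"
  assumes "uncurling_metric L"
  obtains r where "r > 0"
    and "\<And>x p q. x \<in> ball mone r \<Longrightarrow>
      (L *v mvec (matrix_inv (munvec x) ** munvec (axis q 1) ** matrix_inv (munvec x))) $ p
    = (L *v mvec (matrix_inv (munvec x) ** munvec (axis p 1) ** matrix_inv (munvec x))) $ q"
proof -
  obtain r where "r > 0" and inv: "\<forall>x\<in>ball (mone :: real^('n \<times> 'n)) r. invertible (munvec x)"
    and closed: "closed_form_on (\<lambda>x. L *v minv x) (ball mone r)"
    using assms unfolding uncurling_metric_def by blast
  show ?thesis
  proof (rule that[OF \<open>r > 0\<close>])
    fix x :: "real^('n \<times> 'n)" and p q
    assume x: "x \<in> ball mone r"
    obtain D where D: "((\<lambda>x. L *v minv x) has_derivative D) (at x)"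
      and sym: "\<forall>i j. D (axis j 1) $ i = D (axis i 1) $ j"
      using closed x unfolding closed_form_on_def by blast
    have "D = (\<lambda>h. - (L *v mvec (matrix_inv (munvec x) ** munvec h ** matrix_inv (munvec x))))"
      by (rule has_derivative_unique[OF D has_derivative_matrix_vector_minv]) (use inv x in blast)
    then show "(L *v mvec (matrix_inv (munvec x) ** munvec (axis q 1) ** matrix_inv (munvec x))) $ p
      = (L *v mvec (matrix_inv (munvec x) ** munvec (axis p 1) ** matrix_inv (munvec x))) $ q"
      using sym[rule_format, of p q] by simp
  qed
qed

lemma sandwich_identity_perturbation:
  fixes A E :: "real^'n::finite^'n"
  shows "(mat 1 + t *\<^sub>R A) ** E ** (mat 1 + t *\<^sub>R A)
    = E + t *\<^sub>R (A ** E + E ** A) + t\<^sup>2 *\<^sub>R (A ** E ** A)"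
proof -
  have "(mat 1 + t *\<^sub>R A) ** E ** (mat 1 + t *\<^sub>R A) = (E + t *\<^sub>R (A ** E)) ** (mat 1 + t *\<^sub>R A)"
    by (simp add: matrix_add_rdistrib scalar_matrix_assoc)
  also have "\<dots> = E + t *\<^sub>R (A ** E + E ** A) + t\<^sup>2 *\<^sub>R (A ** E ** A)"
    by (simp add: matrix_add_ldistrib matrix_add_rdistrib matrix_scalar_ac scalar_matrix_assoc[symmetric]
        power2_eq_square scaleR_add_right add.assoc)
  finally show ?thesis .
qed

text \<open>Closedness at \<open>x = (1 + tA)\<^sup>-\<^sup>1\<close>, where \<open>S E\<^sub>q S\<close> is quadratic in \<open>t\<close>, compared at first order.\<close>

lemma uncurling_metric_linear_condition:
  fixes L :: "real^('n::finite \<times> 'n)^('n \<times> 'n)"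
  assumes "uncurling_metric L"
  shows "(L *v mvec (A ** munvec (axis q 1) + munvec (axis q 1) ** A)) $ p
       = (L *v mvec (A ** munvec (axis p 1) + munvec (axis p 1) ** A)) $ q"
proof -
  obtain r where "r > 0"
    and sym: "\<And>x p q. x \<in> ball mone r \<Longrightarrow>
      (L *v mvec (matrix_inv (munvec x) ** munvec (axis q 1) ** matrix_inv (munvec x))) $ p
    = (L *v mvec (matrix_inv (munvec x) ** munvec (axis p 1) ** matrix_inv (munvec x))) $ q"
    using uncurling_metric_sandwich_symmetric[OF assms] by blast
  let ?f = "\<lambda>p q. (L *v mvec (munvec (axis q 1))) $ p"
  let ?g = "\<lambda>p q. (L *v mvec (A ** munvec (axis q 1) + munvec (axis q 1) ** A)) $ p"
  let ?h = "\<lambda>p q. (L *v mvec (A ** munvec (axis q 1) ** A)) $ p"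
  have expand: "(L *v mvec ((mat 1 + t *\<^sub>R A) ** munvec (axis q 1) ** (mat 1 + t *\<^sub>R A))) $ p
      = ?f p q + t * ?g p q + t\<^sup>2 * ?h p q" for t p q
    unfolding sandwich_identity_perturbation mvec_add mvec_scaleR matrix_vector_right_distrib
      matrix_vector_mult_scaleR by simp
  have "\<forall>\<^sub>F t in nhds 0. ?f p q + t * ?g p q + t\<^sup>2 * ?h p q = ?f q p + t * ?g q p + t\<^sup>2 * ?h q p"
    using eventually_identity_perturbation[OF \<open>r > 0\<close>, of A]
  proof eventually_elim
    case (elim t)
    let ?x = "mvec (matrix_inv (mat 1 + t *\<^sub>R A))"
    have inv_eq: "matrix_inv (munvec ?x) = mat 1 + t *\<^sub>R A"
      by (intro matrix_inv_eqI) (simp add: matrix_inv_left elim)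
    have "?x \<in> ball mone r"
      using elim by blast
    then show ?case
      using sym[of ?x q p] unfolding inv_eq expand by blast
  qed
  then show ?thesis
    by (rule quadratic_eq_near_0_imp_linear_coeff_eq)
qed

lemma anticommutator_elementary_nth:
  fixes L :: "real^('n::finite \<times> 'n)^('n \<times> 'n)"
  shows "(L *v mvec (munvec (axis (i, j) 1) ** munvec (axis q 1) + munvec (axis q 1) ** munvec (axis (i, j) 1))) $ p
    = (if fst q = j then L $ p $ (i, snd q) else 0) + (if snd q = i then L $ p $ (fst q, j) else 0)"
  by (cases q) (simp add: elementary_matrix_mult mvec_add matrix_vector_right_distrib
      matrix_vector_mult_axis_nth)

lemma ex_scaleR_transpose_matrix:
  fixes L :: "real^('n::finite \<times> 'n)^('n \<times> 'n)"
  assumes H: "\<And>i j a b c d. (if c = j then L $ (a, b) $ (i, d) else 0) + (if d = i then L $ (a, b) $ (c, j) else 0)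
    = (if a = j then L $ (c, d) $ (i, b) else 0) + (if b = i then L $ (c, d) $ (a, j) else 0)"
  shows "\<exists>c. L = c *\<^sub>R transpose_matrix"
proof -
  \<comment> \<open>Summing the hypothesis over \<open>c = d\<close> expresses every entry of \<open>L\<close> through the partial trace \<open>m\<close>.\<close>
  define m where "m x y = (\<Sum>c\<in>UNIV. L $ (c, c) $ (x, y))" for x y
  have L_eq: "2 * L $ (a, b) $ (i, j) = (if j = a then m i b else 0) + (if b = i then m a j else 0)" for a b i j
  proof -
    have "(\<Sum>c\<in>UNIV. (if c = j then L $ (a, b) $ (i, c) else 0) + (if c = i then L $ (a, b) $ (c, j) else 0))
        = (\<Sum>c\<in>UNIV. (if a = j then L $ (c, c) $ (i, b) else 0) + (if b = i then L $ (c, c) $ (a, j) else 0))"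
      using H by (intro sum.cong) auto
    then show ?thesis
      by (cases "a = j"; cases "b = i") (simp_all add: sum.distrib m_def)
  qed
  have m_off_diagonal: "m x y = 0" if "x \<noteq> y" for x y
    using H[of x x x y x x] L_eq[of x y x x] L_eq[of x x x y] that by simp
  have m_diagonal: "m y y = m x x" for x y
  proof (cases "x = y")
    case False
    then show ?thesis
      using H[of x y y x x x] L_eq[of y x x y] L_eq[of x x x x] L_eq[of x x y y] by simp
  qed simp
  have "L = m undefined undefined *\<^sub>R transpose_matrix"
  proof (unfold vec_eq_iff, intro allI)
    fix p q :: "'n \<times> 'n"
    obtain a b g d where "p = (a, b)" and "q = (g, d)"
      by (cases p, cases q)
    then show "L $ p $ q = (m undefined undefined *\<^sub>R transpose_matrix) $ p $ q"
      using L_eq[of a b g d] m_off_diagonal[of g b] m_off_diagonal[of a d]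
        m_diagonal[of a undefined] m_diagonal[of b undefined]
      by (cases "d = a"; cases "b = g") (auto simp: transpose_matrix_def)
  qed
  then show ?thesis ..
qed

theorem uncurling_metric_iff:
  fixes L :: "real^('n::finite \<times> 'n)^('n \<times> 'n)"
  shows "uncurling_metric L \<longleftrightarrow> (\<exists>c. L = c *\<^sub>R transpose_matrix)"
proof
  assume "uncurling_metric L"
  show "\<exists>c. L = c *\<^sub>R transpose_matrix"
  proof (rule ex_scaleR_transpose_matrix)
    fix i j a b c d :: 'n
    show "(if c = j then L $ (a, b) $ (i, d) else 0) + (if d = i then L $ (a, b) $ (c, j) else 0)
      = (if a = j then L $ (c, d) $ (i, b) else 0) + (if b = i then L $ (c, d) $ (a, j) else 0)"
      using uncurling_metric_linear_condition[OF \<open>uncurling_metric L\<close>, of "munvec (axis (i, j) 1)" "(c, d)" "(a, b)"]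
      unfolding anticommutator_elementary_nth fst_conv snd_conv .
  qed
qed (auto simp: uncurling_metric_scaleR_transpose_matrix)

section \<open>The special unital norm\<close>

lemma left_reg_mat_1 [simp]: "left_reg (mat 1 :: real^'n::finite^'n) = mat 1"
  by (auto simp: vec_eq_iff left_reg_def mat_def prod_eq_iff)

lemma left_reg_add: "left_reg (A + B) = left_reg A + left_reg (B :: real^'n::finite^'n)"
  by (auto simp: vec_eq_iff left_reg_def)

lemma left_reg_scaleR: "left_reg (c *\<^sub>R A) = c *\<^sub>R left_reg (A :: real^'n::finite^'n)"
  by (auto simp: vec_eq_iff left_reg_def)

lemma left_reg_mult: "left_reg (A ** B) = left_reg A ** left_reg (B :: real^'n::finite^'n)"
proof -
  have "(left_reg A ** left_reg B) $ p $ q = left_reg (A ** B) $ p $ q" for p q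
  proof -
    have "(left_reg A ** left_reg B) $ p $ q
        = (\<Sum>i\<in>UNIV. \<Sum>j\<in>UNIV. left_reg A $ p $ (i, j) * left_reg B $ (i, j) $ q)"
      by (simp add: matrix_matrix_mult_def sum_UNIV_pair[of "\<lambda>r. left_reg A $ p $ r * left_reg B $ r $ q"])
    also have "\<dots> = (\<Sum>i\<in>UNIV. \<Sum>j\<in>UNIV.
        if j = snd p then (if snd q = snd p then A $ fst p $ i * B $ i $ fst q else 0) else 0)"
      by (intro sum.cong refl) (auto simp: left_reg_def)
    also have "\<dots> = left_reg (A ** B) $ p $ q"
      by (simp add: left_reg_def matrix_matrix_mult_def)
    finally show ?thesis .
  qed
  then show ?thesis
    by (simp add: vec_eq_iff)
qed

lemma
  fixes M :: "real^'n::finite^'n"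
  assumes "invertible M"
  shows invertible_left_reg: "invertible (left_reg M)"
    and matrix_inv_left_reg: "matrix_inv (left_reg M) = left_reg (matrix_inv M)"
proof -
  have "left_reg M ** left_reg (matrix_inv M) = mat 1"
    by (simp add: left_reg_mult[symmetric] matrix_inv_right assms)
  then show "invertible (left_reg M)" and "matrix_inv (left_reg M) = left_reg (matrix_inv M)"
    using invertible_right_inverse matrix_inv_eqI by blast+
qed

lemma trace_left_reg: "trace (left_reg (M :: real^'n::finite^'n)) = real CARD('n) * trace M"
  by (simp add: trace_def left_reg_def sum_UNIV_pair sum_distrib_left)

lemma log_derivative_power_eq:
  fixes f g \<tau> :: "real \<Rightarrow> real"
  assumes f': "\<And>t. t \<in> {0..1} \<Longrightarrow> (f has_real_derivative real k * \<tau> t * f t) (at t)"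
    and g': "\<And>t. t \<in> {0..1} \<Longrightarrow> (g has_real_derivative \<tau> t * g t) (at t)"
    and g_nonzero: "\<And>t. t \<in> {0..1} \<Longrightarrow> g t \<noteq> 0"
  shows "f 1 * g 0 ^ k = f 0 * g 1 ^ k"
proof -
  define h where "h t = f t / g t ^ k" for t
  have h': "(h has_real_derivative 0) (at t)" if t: "t \<in> {0..1}" for t
  proof -
    have "(h has_real_derivative
        (real k * \<tau> t * f t * g t ^ k - f t * (real k * (\<tau> t * g t * g t ^ (k - Suc 0))))
          / (g t ^ k * g t ^ k)) (at t)"
      unfolding h_def[abs_def] using g_nonzero[OF t] by (intro DERIV_divide f' DERIV_power g' t) simp
    moreover have "real k * \<tau> t * f t * g t ^ k - f t * (real k * (\<tau> t * g t * g t ^ (k - Suc 0))) = 0"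
      by (cases k) simp_all
    ultimately show ?thesis
      by simp
  qed
  have "h 1 = h 0"
  proof (rule DERIV_isconst_end[of 0 1 h])
    show "continuous_on {0..1} h"
      using h' by (intro continuous_at_imp_continuous_on) (blast intro: DERIV_isCont)
  qed (use h' in auto)
  then show ?thesis
    using g_nonzero[of 0] g_nonzero[of 1] by (simp add: h_def field_simps)
qed

lemma integral_trace_eq_ln_det:
  fixes B :: "real^'n::finite^'n"
  assumes pos: "\<And>u. u \<in> {0..1} \<Longrightarrow> det (mat 1 + u *\<^sub>R B) > 0"
  shows "integral {0..1} (\<lambda>u. trace (matrix_inv (mat 1 + u *\<^sub>R B) ** B)) = ln (det (mat 1 + B))"
proof -
  have "((\<lambda>u. ln (det (mat 1 + u *\<^sub>R B))) has_real_derivative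
      trace (matrix_inv (mat 1 + u *\<^sub>R B) ** B)) (at u)" if u: "u \<in> {0..1}" for u
  proof -
    have "invertible (mat 1 + u *\<^sub>R B)"
      using pos[OF u] invertible_det_nz by force
    from DERIV_chain2[OF DERIV_ln[OF pos[OF u]] has_real_derivative_det_line[OF this]]
    show ?thesis
      by (rule DERIV_cong) (use pos[OF u] in simp)
  qed
  then have "((\<lambda>u. trace (matrix_inv (mat 1 + u *\<^sub>R B) ** B)) has_integral
      ln (det (mat 1 + 1 *\<^sub>R B)) - ln (det (mat 1 + 0 *\<^sub>R B))) {0..1}"
    by (intro fundamental_theorem_of_calculus)
      (auto simp: has_real_derivative_iff_has_vector_derivative[symmetric] intro: DERIV_subset)
  then show ?thesis
    by (simp add: integral_unique)
qed

text \<open>Comparing logarithmic derivatives along the segment avoids a block-determinant computation.\<close>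

lemma det_left_reg_eq_power:
  fixes B :: "real^'n::finite^'n"
  assumes inv: "\<And>u. u \<in> {0..1} \<Longrightarrow> invertible (mat 1 + u *\<^sub>R B)"
  shows "det (left_reg (mat 1 + B)) = det (mat 1 + B) ^ CARD('n)"
proof -
  define \<tau> where "\<tau> u = trace (matrix_inv (mat 1 + u *\<^sub>R B) ** B)" for u
  have left_reg_line: "left_reg (mat 1 + u *\<^sub>R B) = mat 1 + u *\<^sub>R left_reg B" for u
    by (simp add: left_reg_add left_reg_scaleR)
  have "((\<lambda>u. det (mat 1 + u *\<^sub>R left_reg B)) has_real_derivative
      real CARD('n) * \<tau> u * det (mat 1 + u *\<^sub>R left_reg B)) (at u)" if u: "u \<in> {0..1}" for u
  proof -
    have "trace (matrix_inv (mat 1 + u *\<^sub>R left_reg B) ** left_reg B) = real CARD('n) * \<tau> u"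
      using matrix_inv_left_reg[OF inv[OF u]]
      by (simp add: left_reg_line \<tau>_def left_reg_mult[symmetric] trace_left_reg)
    with has_real_derivative_det_line[of "mat 1" u "left_reg B"] show ?thesis
      using invertible_left_reg[OF inv[OF u]] by (simp add: left_reg_line mult_ac)
  qed
  moreover have "((\<lambda>u. det (mat 1 + u *\<^sub>R B)) has_real_derivative \<tau> u * det (mat 1 + u *\<^sub>R B)) (at u)"
    if u: "u \<in> {0..1}" for u
    using has_real_derivative_det_line[OF inv[OF u]] by (simp add: \<tau>_def mult_ac)
  moreover have "det (mat 1 + u *\<^sub>R B) \<noteq> 0" if "u \<in> {0..1}" for u
    using inv[OF that] invertible_det_nz by blast
  ultimately have "det (mat 1 + 1 *\<^sub>R left_reg B) * det (mat 1 + 0 *\<^sub>R B) ^ CARD('n)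
      = det (mat 1 + 0 *\<^sub>R left_reg B) * det (mat 1 + 1 *\<^sub>R B) ^ CARD('n)"
    by (rule log_derivative_power_eq)
  then show ?thesis
    by (simp add: left_reg_line[of 1, simplified])
qed

lemma det_segment_pos:
  fixes x :: "real^('n::finite \<times> 'n)"
  assumes pos: "\<forall>y\<in>ball (mone :: real^('n \<times> 'n)) r. det (munvec y) > 0" and x: "x \<in> ball mone r" and u: "u \<in> {0..1}"
  shows "det (mat 1 + u *\<^sub>R (munvec x - mat 1)) > 0"
proof -
  have "r > 0"
    using x by (metis mem_ball zero_le_dist le_less_trans)
  then have "(1 - u) *\<^sub>R mone + u *\<^sub>R x \<in> ball mone r"
    using u x by (intro convexD_alt[OF convex_ball]) auto
  then have "det (munvec ((1 - u) *\<^sub>R mone + u *\<^sub>R x)) > 0"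
    using pos by blast
  moreover have "munvec ((1 - u) *\<^sub>R mone + u *\<^sub>R x) = mat 1 + u *\<^sub>R (munvec x - mat 1)"
    unfolding munvec_add munvec_scaleR munvec_mone by (simp add: algebra_simps)
  ultimately show ?thesis
    by simp
qed

lemma unital_norm_transpose_matrix:
  fixes x :: "real^('n::finite \<times> 'n)"
  assumes pos: "\<forall>y\<in>ball (mone :: real^('n \<times> 'n)) r. det (munvec y) > 0" and x: "x \<in> ball mone r"
  shows "unital_norm transpose_matrix x = det (munvec x) powr (1 / real CARD('n))"
proof -
  define B where "B = munvec x - mat 1"
  have "integral {0..1} (\<lambda>u. trace (matrix_inv (mat 1 + u *\<^sub>R B) ** B)) = ln (det (mat 1 + B))"
    using det_segment_pos[OF pos x] unfolding B_def by (rule integral_trace_eq_ln_det)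
  moreover have "mat 1 + B = munvec x"
    by (simp add: B_def)
  moreover have "(transpose_matrix *v minv (mone + u *\<^sub>R (x - mone))) \<bullet> (x - mone)
      = trace (matrix_inv (mat 1 + u *\<^sub>R B) ** B)" for u
    by (simp add: minv_def transpose_matrix_inner_eq_trace munvec_add munvec_scaleR munvec_diff B_def)
  moreover have "det (munvec x) > 0"
    using pos x by blast
  ultimately show ?thesis
    by (simp add: unital_norm_def one_normsq_eq_card powr_def)
qed

lemma det_left_reg_munvec:
  fixes x :: "real^('n::finite \<times> 'n)"
  assumes pos: "\<forall>y\<in>ball (mone :: real^('n \<times> 'n)) r. det (munvec y) > 0" and x: "x \<in> ball mone r"
  shows "det (left_reg (munvec x)) = det (munvec x) ^ CARD('n)"
proof -
  have "invertible (mat 1 + u *\<^sub>R (munvec x - mat 1))" if "u \<in> {0..1}" for u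
    using det_segment_pos[OF pos x that] invertible_det_nz by force
  from det_left_reg_eq_power[OF this] show ?thesis
    by simp
qed

lemma power_powr_one_div_square:
  fixes a :: real
  assumes "a > 0" and "n > 0"
  shows "(a ^ n) powr (1 / real n ^ 2) = a powr (1 / real n)"
  using assms by (simp add: powr_realpow[symmetric] powr_powr power2_eq_square)

lemma anti_rotor_eq_span: "anti_rotor TYPE('n::finite) = span {transpose_matrix :: real^('n \<times> 'n)^('n \<times> 'n)}"
  by (auto simp: anti_rotor_def uncurling_metric_iff span_singleton)

lemma transpose_matrix_nonzero: "transpose_matrix \<noteq> (0 :: real^('n::finite \<times> 'n)^('n \<times> 'n))"
proof -
  have "(transpose_matrix :: real^('n \<times> 'n)^('n \<times> 'n)) $ (i, i) $ (i, i) = 1" for i :: 'n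
    by (simp add: transpose_matrix_def)
  then show ?thesis
    by (metis zero_index zero_neq_one)
qed

theorem normalized_uncurling_metric_iff:
  fixes L :: "real^('n::finite \<times> 'n)^('n \<times> 'n)"
  shows "normalized_uncurling_metric L \<longleftrightarrow> L = transpose_matrix"
proof
  assume L: "normalized_uncurling_metric L"
  then obtain c where c: "L = c *\<^sub>R transpose_matrix"
    unfolding normalized_uncurling_metric_def uncurling_metric_iff by blast
  from L obtain r where "r > 0" and "\<forall>x\<in>ball mone r. x \<bullet> (L *v minv x) = one_normsq TYPE('n)"
    unfolding normalized_uncurling_metric_def by blast
  then have "mone \<bullet> (L *v minv mone) = real CARD('n)"
    by (simp add: one_normsq_eq_card)
  moreover have "mone \<bullet> (L *v minv mone) = c * real CARD('n)"
    using inner_transpose_matrix_minv[of "mone :: real^('n \<times> 'n)"]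
    by (simp add: c scaleR_matrix_vector_assoc[symmetric] invertible_det_nz)
  ultimately show "L = transpose_matrix"
    using c by simp
next
  assume L: "L = transpose_matrix"
  obtain r where "r > 0" and pos: "\<forall>x\<in>ball (mone :: real^('n \<times> 'n)) r. det (munvec x) > 0"
    using det_munvec_pos_near_mone by blast
  then have "\<forall>x\<in>ball (mone :: real^('n \<times> 'n)) r. x \<bullet> (transpose_matrix *v minv x) = one_normsq TYPE('n)"
    by (auto simp: one_normsq_eq_card invertible_det_nz intro!: inner_transpose_matrix_minv)
  then show "normalized_uncurling_metric L"
    unfolding normalized_uncurling_metric_def L
    using uncurling_metric_scaleR_transpose_matrix[of 1] \<open>r > 0\<close> by auto
qed

theorem theorem8p1:
  shows "subspace (anti_rotor TYPE('n::finite)) \<and> dim (anti_rotor TYPE('n)) = 1 \<and>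
    {L. normalized_uncurling_metric L} = {transpose_matrix :: real^('n \<times> 'n)^('n \<times> 'n)} \<and>
    (\<exists>r>0. \<forall>x\<in>ball (mone :: real^('n \<times> 'n)) r.
        unital_norm transpose_matrix x = det (munvec x) powr (1 / real CARD('n)) \<and>
        unital_norm transpose_matrix x = det (left_reg (munvec x)) powr (1 / real (CARD('n))^2))"
proof -
  obtain r where "r > 0" and pos: "\<forall>x\<in>ball (mone :: real^('n \<times> 'n)) r. det (munvec x) > 0"
    using det_munvec_pos_near_mone by blast
  have "unital_norm transpose_matrix x = det (munvec x) powr (1 / real CARD('n))"
    and "det (left_reg (munvec x)) powr (1 / real CARD('n)^2) = det (munvec x) powr (1 / real CARD('n))"
    if "x \<in> ball mone r" for x :: "real^('n \<times> 'n)"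
    using unital_norm_transpose_matrix[OF pos that] det_left_reg_munvec[OF pos that]
      power_powr_one_div_square[of "det (munvec x)" "CARD('n)"] pos that
    by auto
  then show ?thesis
    using \<open>r > 0\<close> transpose_matrix_nonzero
    by (auto simp: anti_rotor_eq_span normalized_uncurling_metric_iff)
qed

end
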